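(* Let $\langle A,\preccurlyeq\rangle$ be a pre-ordered set, and consider the condition ( * ) for every $a\in A$ there is $b\in A$ with $b\prec a$. (i) If $\preccurlyeq$ satisfies ( * ), then $LO(A,\preccurlyeq)$ contains no minimal sets; consequently every $pr(a)$, $a\in A$, is infinite, and every set in $LO(A,\preccurlyeq)$ is infinite. (ii) Conversely, if ( * ) fails, then $LO(A,\preccurlyeq)$ contains a minimal set.
   Context: A pre-ordering $\preccurlyeq$ on $A$ is a reflexive and transitive binary relation; $b\prec a$ means $b\preccurlyeq a$ and not $a\preccurlyeq b$. For $a\in A$, $pr(a)=\{b\in A: b\preccurlyeq a\}$. $LO(A,\preccurlyeq)$ is the set of all nonempty subsets $x\subseteq A$ such that $pr(c)\subseteq x$ for every $c\in x$. A set $x\in LO(A,\preccurlyeq)$ is minimal if there is no $y\in LO(A,\preccurlyeq)$ with $y\subsetneq x$. *)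

theory Defs
  imports Main
begin

text \<open>A pre-ordered set is a carrier A with a relation r (a set of pairs), where
  (b, a) \<in> r means b \<preccurlyeq> a.  We use the library notion preorder_on A r.\<close>

definition strictly_below :: "('a \<times> 'a) set \<Rightarrow> 'a \<Rightarrow> 'a \<Rightarrow> bool" where
  "strictly_below r b a \<longleftrightarrow> (b, a) \<in> r \<and> (a, b) \<notin> r"

definition pr :: "'a set \<Rightarrow> ('a \<times> 'a) set \<Rightarrow> 'a \<Rightarrow> 'a set" where
  "pr A r a = {b \<in> A. (b, a) \<in> r}"

definition LO :: "'a set \<Rightarrow> ('a \<times> 'a) set \<Rightarrow> 'a set set" where
  "LO A r = {x. x \<noteq> {} \<and> x \<subseteq> A \<and> (\<forall>c\<in>x. pr A r c \<subseteq> x)}"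

definition minimal_LO :: "'a set \<Rightarrow> ('a \<times> 'a) set \<Rightarrow> 'a set \<Rightarrow> bool" where
  "minimal_LO A r x \<longleftrightarrow> x \<in> LO A r \<and> \<not> (\<exists>y \<in> LO A r. y \<subset> x)"

end

theory Submission
  imports Defs
begin

text \<open>If every a has some b \<prec> a, then pr b is a proper LO-subset of pr c \<subseteq> x
  for any c \<in> x, so no set of LO is minimal; a finite set of LO would contain an LO-subset of
  least cardinality, which is minimal, hence all sets of LO are infinite.  If some a has
  nothing strictly below it, then any LO-subset of pr a contains some d \<preccurlyeq> a, hence
  a \<preccurlyeq> d and pr a \<subseteq> pr d, so pr a is minimal.\<close>

lemma pr_in_LO:
  assumes "preorder_on A r" "a \<in> A"
  shows "pr A r a \<in> LO A r"
proof -
  have "refl_on A r" "trans r" using assms(1) unfolding preorder_on_def by auto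
  then show ?thesis using assms(2) unfolding LO_def pr_def
    by (auto dest: refl_onD elim: transE)
qed

lemma pr_mono:
  assumes "trans r" "(b, a) \<in> r"
  shows "pr A r b \<subseteq> pr A r a"
  using assms unfolding pr_def by (auto elim: transE)

lemma pr_psubset_LO:
  assumes "trans r" "strictly_below r b c" "x \<in> LO A r" "c \<in> x"
  shows "pr A r b \<subset> x"
proof -
  have "pr A r b \<subseteq> pr A r c" using assms(1,2) pr_mono unfolding strictly_below_def by metis
  also have "\<dots> \<subseteq> x" using assms(3,4) unfolding LO_def by blast
  finally show ?thesis using assms(2,4) unfolding pr_def strictly_below_def by blast
qed

lemma no_minimal_LO_if_no_minimal_element:
  assumes "preorder_on A r" "\<forall>a\<in>A. \<exists>b\<in>A. strictly_below r b a"
  shows "\<not> minimal_LO A r x"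
proof
  assume "minimal_LO A r x"
  then have x: "x \<in> LO A r" and no_smaller: "\<not> (\<exists>y \<in> LO A r. y \<subset> x)"
    unfolding minimal_LO_def by blast+
  obtain c where "c \<in> x" "c \<in> A" using x unfolding LO_def by blast
  then obtain b where "b \<in> A" "strictly_below r b c" using assms(2) by blast
  moreover have "trans r" using assms(1) unfolding preorder_on_def by blast
  ultimately have "pr A r b \<subset> x" using pr_psubset_LO x \<open>c \<in> x\<close> by metis
  with no_smaller pr_in_LO[OF assms(1) \<open>b \<in> A\<close>] show False by blast
qed

lemma minimal_LO_pr:
  assumes "preorder_on A r" "a \<in> A" "\<forall>b\<in>A. \<not> strictly_below r b a"
  shows "minimal_LO A r (pr A r a)"
  unfolding minimal_LO_def
proof (intro conjI pr_in_LO[OF assms(1,2)] notI)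
  assume "\<exists>y\<in>LO A r. y \<subset> pr A r a"
  then obtain y where y: "y \<in> LO A r" "y \<subset> pr A r a" by blast
  obtain d where d: "d \<in> y" "pr A r d \<subseteq> y" using y(1) unfolding LO_def by blast
  have "d \<in> A" "(d, a) \<in> r" using d(1) y(2) unfolding pr_def by auto
  then have "(a, d) \<in> r" using assms(3) unfolding strictly_below_def by blast
  moreover have "trans r" using assms(1) unfolding preorder_on_def by blast
  ultimately have "pr A r a \<subseteq> pr A r d" using pr_mono by metis
  with d(2) y(2) show False by blast
qed

lemma finite_LO_imp_ex_minimal_LO:
  assumes "x \<in> LO A r" "finite x"
  shows "\<exists>y. minimal_LO A r y"
proof -
  obtain y where y: "y \<in> LO A r" "y \<subseteq> x"
    and least: "\<And>z. z \<in> LO A r \<and> z \<subseteq> x \<Longrightarrow> card y \<le> card z"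
    using ex_has_least_nat[of "\<lambda>y. y \<in> LO A r \<and> y \<subseteq> x" x card] assms(1) by blast
  have "minimal_LO A r y"
    unfolding minimal_LO_def
  proof (intro conjI y(1) notI)
    assume "\<exists>z\<in>LO A r. z \<subset> y"
    then obtain z where z: "z \<in> LO A r" "z \<subset> y" by blast
    have "finite y" using y(2) assms(2) finite_subset by blast
    then have "card z < card y" using z(2) psubset_card_mono by blast
    moreover have "card y \<le> card z" using least z y(2) by blast
    ultimately show False by simp
  qed
  then show ?thesis by blast
qed

theorem proposition2p4:
  fixes A :: "'a set" and r :: "('a \<times> 'a) set"
  assumes "preorder_on A r"
  shows "((\<forall>a\<in>A. \<exists>b\<in>A. strictly_below r b a) \<longrightarrow>
            (\<not> (\<exists>x. minimal_LO A r x))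
            \<and> (\<forall>a\<in>A. infinite (pr A r a))
            \<and> (\<forall>x\<in>LO A r. infinite x))
       \<and> (\<not> (\<forall>a\<in>A. \<exists>b\<in>A. strictly_below r b a) \<longrightarrow> (\<exists>x. minimal_LO A r x))"
proof (intro conjI impI)
  assume descending: "\<forall>a\<in>A. \<exists>b\<in>A. strictly_below r b a"
  show no_minimal: "\<not> (\<exists>x. minimal_LO A r x)"
    using no_minimal_LO_if_no_minimal_element[OF assms descending] by blast
  show infinite_LO: "\<forall>x\<in>LO A r. infinite x"
    using no_minimal finite_LO_imp_ex_minimal_LO by blast
  show "\<forall>a\<in>A. infinite (pr A r a)"
    using infinite_LO pr_in_LO[OF assms] by blast
next
  assume "\<not> (\<forall>a\<in>A. \<exists>b\<in>A. strictly_below r b a)"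
  then obtain a where "a \<in> A" "\<forall>b\<in>A. \<not> strictly_below r b a" by blast
  then show "\<exists>x. minimal_LO A r x" using minimal_LO_pr[OF assms] by blast
qed

end
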